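(* Let $q$ be a prime power and $F/\mathbb{F}_q$ an algebraic function field with full constant field $\mathbb{F}_q$ of genus $g\geq 2$. For $n\geq 0$ let $A_n$ be the number of effective divisors of degree $n$ of $F$, for $r\geq1$ let $B_r$ be the number of places of degree $r$ of $F$, let $\Sigma_1=\sum_{n=0}^{g-1}A_n$, let $\Delta_1=\{r: 1\leq r\leq g-1,\ B_r\geq 1\}$ and $\Delta_1'=\Delta_1\setminus\{1\}$. (1) Let $(m_r)_{r\in\Delta_1}$ be integers with $m_r\geq 0$ and $\sum_{r\in\Delta_1} r\,m_r\leq g-1$. Then $$\Sigma_1\geq\prod_{r\in\Delta_1}\binom{B_r+m_r}{m_r}.$$ (2) Suppose $B_1\geq 1$ and let $r_1,\dots,r_u$ be distinct elements of $\Delta_1'$. Then $$\Sigma_1\geq\binom{B_1+g-1}{g-1}+\sum_{i=1}^u\left(\binom{B_{r_i}+\lfloor\frac{g-1}{r_i}\rfloor}{\lfloor\frac{g-1}{r_i}\rfloor}-1\right)\binom{B_1+((g-1)\bmod r_i)}{(g-1)\bmod r_i}.$$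
   Context: $(g-1)\bmod r$ denotes the remainder of the Euclidean division of $g-1$ by $r$. *)

theory Defs
  imports Main
begin

text \<open>Abstract model of the place set of a function field F/F_q:
  a set P of places with a degree function deg (deg >= 1), finitely many
  places of each degree.\<close>

definition eff_divisors :: "'p set \<Rightarrow> ('p \<Rightarrow> nat) \<Rightarrow> nat \<Rightarrow> ('p \<Rightarrow> nat) set" where
  "eff_divisors P deg n =
     {D. (\<forall>x. x \<notin> P \<longrightarrow> D x = 0) \<and> finite {x. D x \<noteq> 0}
         \<and> (\<Sum>x\<in>{x. D x \<noteq> 0}. deg x * D x) = n}"

definition num_eff :: "'p set \<Rightarrow> ('p \<Rightarrow> nat) \<Rightarrow> nat \<Rightarrow> nat" where
  "num_eff P deg n = card (eff_divisors P deg n)"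

definition num_places :: "'p set \<Rightarrow> ('p \<Rightarrow> nat) \<Rightarrow> nat \<Rightarrow> nat" where
  "num_places P deg r = card {x\<in>P. deg x = r}"

definition Sigma1 :: "'p set \<Rightarrow> ('p \<Rightarrow> nat) \<Rightarrow> nat \<Rightarrow> nat" where
  "Sigma1 P deg g = (\<Sum>n = 0..g - 1. num_eff P deg n)"

definition Delta1 :: "'p set \<Rightarrow> ('p \<Rightarrow> nat) \<Rightarrow> nat \<Rightarrow> nat set" where
  "Delta1 P deg g = {r. 1 \<le> r \<and> r \<le> g - 1 \<and> num_places P deg r \<ge> 1}"

end

theory Submission
  imports Defs "HOL-Library.FuncSet"
begin

(* Sigma1 counts the effective divisors of degree at most g - 1.  Such a divisor is glued
   from its restrictions D_r to the places of degree r, each an arbitrary vector in N^(B_r),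
   and by stars and bars there are binom(B_r + m, m) of those of weight at most m.  For (1),
   gluing arbitrary D_r of weight at most m_r yields distinct divisors of degree at most
   sum r m_r <= g - 1.  For (2), take the divisors supported on places of degree 1, and for
   each r in R the divisors D_r + D_1 with D_r nonzero of weight at most (g - 1) div r and
   D_1 of weight at most (g - 1) mod r.  These families are pairwise disjoint, because a
   member of the r-th one is nonzero at a place of degree r and vanishes at all places
   whose degree is neither 1 nor r. *)

definition bounded_vectors :: "'a set \<Rightarrow> nat \<Rightarrow> ('a \<Rightarrow> nat) set" where
  "bounded_vectors A k = {D. (\<forall>x. x \<notin> A \<longrightarrow> D x = 0) \<and> sum D A \<le> k}"

lemma zero_in_bounded_vectors: "(\<lambda>_. 0) \<in> bounded_vectors A k"
  unfolding bounded_vectors_def by simp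

lemma bounded_vectors_insert_bij:
  assumes "finite A" "a \<notin> A"
  shows "bij_betw (\<lambda>D. (D a, D(a := 0))) (bounded_vectors (insert a A) k)
           (SIGMA j:{..k}. bounded_vectors A (k - j))"
proof (rule bij_betw_byWitness[where f' = "\<lambda>(j, E). E(a := j)"])
  have sum_upd: "sum (D(a := j)) A = sum D A" for D :: "'a \<Rightarrow> nat" and j
    using assms(2) by (intro sum.cong) auto
  show "\<forall>D\<in>bounded_vectors (insert a A) k.
      (\<lambda>(j, E). E(a := j)) (D a, D(a := 0)) = D"
    by auto
  show "\<forall>p\<in>(SIGMA j:{..k}. bounded_vectors A (k - j)).
      (\<lambda>D. (D a, D(a := 0))) ((\<lambda>(j, E). E(a := j)) p) = p"
    using assms unfolding bounded_vectors_def by (auto simp: fun_eq_iff)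
  show "(\<lambda>D. (D a, D(a := 0))) ` bounded_vectors (insert a A) k
      \<subseteq> (SIGMA j:{..k}. bounded_vectors A (k - j))"
    using assms sum_upd unfolding bounded_vectors_def by auto
  show "(\<lambda>(j, E). E(a := j)) ` (SIGMA j:{..k}. bounded_vectors A (k - j))
      \<subseteq> bounded_vectors (insert a A) k"
    using assms sum_upd unfolding bounded_vectors_def by auto
qed

lemma card_bounded_vectors:
  assumes "finite A"
  shows "card (bounded_vectors A k) = (card A + k) choose k"
  using assms
proof (induction A arbitrary: k rule: finite_induct)
  case empty
  have empty: "bounded_vectors {} k = {\<lambda>_. 0}"
    unfolding bounded_vectors_def by auto
  show ?case unfolding empty by simp
next
  case (insert a A)
  have "finite (bounded_vectors A j)" for j
    using insert.IH[of j] by (intro card_ge_0_finite) simp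
  then have "card (bounded_vectors (insert a A) k)
      = (\<Sum>j\<le>k. card (bounded_vectors A (k - j)))"
    using bij_betw_same_card[OF bounded_vectors_insert_bij[OF insert.hyps]] by simp
  also have "\<dots> = (\<Sum>j\<le>k. (card A + (k - j)) choose (k - j))"
    using insert.IH by simp
  also have "\<dots> = (\<Sum>i\<le>k. (card A + i) choose i)"
    using sum.atLeastAtMost_rev[of "\<lambda>i. (card A + i) choose i" 0 k]
    by (simp add: atLeast0AtMost)
  also have "\<dots> = Suc (card A + k) choose k"
    by (rule sum_choose_lower)
  finally show ?case
    using insert.hyps by simp
qed

lemma bounded_vectors_support:
  assumes "D \<in> bounded_vectors A k" "D x \<noteq> 0"
  shows "x \<in> A"
  using assms unfolding bounded_vectors_def by (cases "x \<in> A") simp_all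

lemma finite_bounded_vectors: "finite A \<Longrightarrow> finite (bounded_vectors A k)"
  by (intro card_ge_0_finite) (simp add: card_bounded_vectors)

definition eff_divisors_upto :: "'p set \<Rightarrow> ('p \<Rightarrow> nat) \<Rightarrow> nat \<Rightarrow> ('p \<Rightarrow> nat) set" where
  "eff_divisors_upto P deg n = (\<Union>k\<le>n. eff_divisors P deg k)"

lemma eff_divisors_uptoI:
  assumes "finite F" "F \<subseteq> P" "{x. D x \<noteq> 0} \<subseteq> F" "(\<Sum>x\<in>F. deg x * D x) \<le> n"
  shows "D \<in> eff_divisors_upto P deg n"
proof -
  have "finite {x. D x \<noteq> 0}"
    using assms(3,1) by (rule finite_subset)
  moreover have "(\<Sum>x\<in>{x. D x \<noteq> 0}. deg x * D x) = (\<Sum>x\<in>F. deg x * D x)"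
    using assms(1,3) by (intro sum.mono_neutral_left) auto
  ultimately have "D \<in> eff_divisors P deg (\<Sum>x\<in>F. deg x * D x)"
    using assms(2,3) unfolding eff_divisors_def by auto
  then show ?thesis
    using assms(4) unfolding eff_divisors_upto_def by blast
qed

locale graded_places =
  fixes P :: "'p set" and deg :: "'p \<Rightarrow> nat"
  assumes deg_pos: "\<forall>x\<in>P. 1 \<le> deg x"
    and finite_places_of_degree: "\<forall>r. finite {x\<in>P. deg x = r}"
begin

lemma finite_places_of_degree_le: "finite {x\<in>P. deg x \<le> n}"
proof -
  have "{x\<in>P. deg x \<le> n} = (\<Union>r\<le>n. {x\<in>P. deg x = r})"
    by auto
  then show ?thesis
    using finite_places_of_degree by simp
qed

lemma eff_divisors_upto_subset_bounded_vectors: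
  "eff_divisors_upto P deg n \<subseteq> bounded_vectors {x\<in>P. deg x \<le> n} n"
proof
  fix D assume "D \<in> eff_divisors_upto P deg n"
  then have supp: "finite {x. D x \<noteq> 0}" "\<forall>x. x \<notin> P \<longrightarrow> D x = 0"
    and le: "(\<Sum>x\<in>{x. D x \<noteq> 0}. deg x * D x) \<le> n"
    unfolding eff_divisors_upto_def eff_divisors_def by auto
  have weight_le: "D x \<le> deg x * D x" for x
    using deg_pos supp(2) by (cases "x \<in> P") auto
  have supp_subset: "{x. D x \<noteq> 0} \<subseteq> {x\<in>P. deg x \<le> n}"
  proof
    fix x assume "x \<in> {x. D x \<noteq> 0}"
    then have nz: "D x \<noteq> 0" by simp
    have "deg x \<le> deg x * D x"
      using nz by simp
    also have "\<dots> \<le> n"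
      using member_le_sum[of x "{x. D x \<noteq> 0}" "\<lambda>x. deg x * D x"] supp(1) le nz by simp
    finally show "x \<in> {x\<in>P. deg x \<le> n}"
      using supp(2) nz by auto
  qed
  have "sum D {x\<in>P. deg x \<le> n} = sum D {x. D x \<noteq> 0}"
    using finite_places_of_degree_le supp_subset by (intro sum.mono_neutral_right) auto
  also have "\<dots> \<le> (\<Sum>x\<in>{x. D x \<noteq> 0}. deg x * D x)"
    using weight_le by (rule sum_mono)
  finally have "sum D {x\<in>P. deg x \<le> n} \<le> n"
    using le by (rule order_trans)
  moreover have "\<forall>x. x \<notin> {x\<in>P. deg x \<le> n} \<longrightarrow> D x = 0"
    using supp_subset by blast
  ultimately show "D \<in> bounded_vectors {x\<in>P. deg x \<le> n} n"
    unfolding bounded_vectors_def by blast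
qed

lemma finite_eff_divisors_upto: "finite (eff_divisors_upto P deg n)"
  using eff_divisors_upto_subset_bounded_vectors finite_places_of_degree_le
  by (rule finite_subset[OF _ finite_bounded_vectors])

lemma Sigma1_eq_card_eff_divisors_upto:
  "Sigma1 P deg g = card (eff_divisors_upto P deg (g - 1))"
proof -
  have "finite (eff_divisors P deg k)" if "k \<le> g - 1" for k
  proof (rule finite_subset)
    show "eff_divisors P deg k \<subseteq> eff_divisors_upto P deg (g - 1)"
      using that unfolding eff_divisors_upto_def by auto
  qed (rule finite_eff_divisors_upto)
  then have "card (eff_divisors_upto P deg (g - 1)) = (\<Sum>k\<le>g - 1. num_eff P deg k)"
    unfolding eff_divisors_upto_def num_eff_def
    by (intro card_UN_disjoint) (auto simp: eff_divisors_def)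
  then show ?thesis
    unfolding Sigma1_def by (simp add: atLeast0AtMost)
qed

definition glue_parts :: "nat set \<Rightarrow> (nat \<Rightarrow> 'p \<Rightarrow> nat) \<Rightarrow> 'p \<Rightarrow> nat" where
  "glue_parts I f = (\<lambda>x. if deg x \<in> I then f (deg x) x else 0)"

lemma inj_on_glue_parts:
  assumes parts: "\<And>r. r \<in> I \<Longrightarrow> F r \<subseteq> bounded_vectors {x\<in>P. deg x = r} (m r)"
  shows "inj_on (glue_parts I) (PiE I F)"
proof (rule inj_onI)
  fix f f' assume f: "f \<in> PiE I F" and f': "f' \<in> PiE I F"
    and eq: "glue_parts I f = glue_parts I f'"
  show "f = f'"
  proof (rule PiE_ext[OF f f'], rule ext)
    fix r x assume r: "r \<in> I"
    show "f r x = f' r x"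
    proof (cases "x \<in> P \<and> deg x = r")
      case True
      then show ?thesis
        using fun_cong[OF eq, of x] r unfolding glue_parts_def by simp
    next
      case False
      have "f r \<in> bounded_vectors {x\<in>P. deg x = r} (m r)"
        "f' r \<in> bounded_vectors {x\<in>P. deg x = r} (m r)"
        using f f' r parts by (auto dest: PiE_mem)
      with False show ?thesis
        unfolding bounded_vectors_def by auto
    qed
  qed
qed

lemma glue_parts_image_subset:
  assumes "finite I"
    and parts: "\<And>r. r \<in> I \<Longrightarrow> F r \<subseteq> bounded_vectors {x\<in>P. deg x = r} (m r)"
    and weight: "(\<Sum>r\<in>I. r * m r) \<le> n"
  shows "glue_parts I ` PiE I F \<subseteq> eff_divisors_upto P deg n"
proof (rule image_subsetI)
  fix f assume "f \<in> PiE I F"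
  then have part: "f r \<in> bounded_vectors {x\<in>P. deg x = r} (m r)" if "r \<in> I" for r
    using parts that by (auto dest: PiE_mem)
  let ?U = "\<Union>r\<in>I. {x\<in>P. deg x = r}"
  show "glue_parts I f \<in> eff_divisors_upto P deg n"
  proof (rule eff_divisors_uptoI)
    show "finite ?U"
      using assms(1) finite_places_of_degree by auto
    show "?U \<subseteq> P"
      by auto
    show "{x. glue_parts I f x \<noteq> 0} \<subseteq> ?U"
    proof
      fix x assume "x \<in> {x. glue_parts I f x \<noteq> 0}"
      then have "deg x \<in> I" "f (deg x) x \<noteq> 0"
        unfolding glue_parts_def by (auto split: if_splits)
      then show "x \<in> ?U"
        using bounded_vectors_support[OF part] by blast
    qed
    have "(\<Sum>x\<in>?U. deg x * glue_parts I f x)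
        = (\<Sum>r\<in>I. \<Sum>x\<in>{x\<in>P. deg x = r}. r * f r x)"
      using assms(1) finite_places_of_degree
      by (subst sum.UNION_disjoint) (auto simp: glue_parts_def intro!: sum.cong)
    also have "\<dots> = (\<Sum>r\<in>I. r * sum (f r) {x\<in>P. deg x = r})"
      by (simp add: sum_distrib_left)
    also have "\<dots> \<le> (\<Sum>r\<in>I. r * m r)"
      using part unfolding bounded_vectors_def by (intro sum_mono mult_left_mono) auto
    finally show "(\<Sum>x\<in>?U. deg x * glue_parts I f x) \<le> n"
      using weight by (rule order_trans)
  qed
qed

lemma card_glue_parts_image:
  assumes "finite I"
    and parts: "\<And>r. r \<in> I \<Longrightarrow> F r \<subseteq> bounded_vectors {x\<in>P. deg x = r} (m r)"
  shows "card (glue_parts I ` PiE I F) = (\<Prod>r\<in>I. card (F r))"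
  using card_image[OF inj_on_glue_parts[OF parts]] card_PiE[OF assms(1)] by simp

lemma prod_choose_le_card_eff_divisors_upto:
  assumes "finite I" and weight: "(\<Sum>r\<in>I. r * m r) \<le> n"
  shows "(\<Prod>r\<in>I. (num_places P deg r + m r) choose m r)
    \<le> card (eff_divisors_upto P deg n)"
proof -
  let ?F = "\<lambda>r. bounded_vectors {x\<in>P. deg x = r} (m r)"
  have "(\<Prod>r\<in>I. (num_places P deg r + m r) choose m r) = card (glue_parts I ` PiE I ?F)"
    using card_glue_parts_image[OF assms(1), of ?F m] finite_places_of_degree
    by (simp add: num_places_def card_bounded_vectors)
  also have "\<dots> \<le> card (eff_divisors_upto P deg n)"
    using glue_parts_image_subset[OF assms(1) _ weight, of ?F] finite_eff_divisors_upto
    by (intro card_mono) auto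
  finally show ?thesis .
qed

definition mixed_parts :: "nat \<Rightarrow> nat \<Rightarrow> nat \<Rightarrow> ('p \<Rightarrow> nat) set" where
  "mixed_parts n r s =
     (if s = r then bounded_vectors {x\<in>P. deg x = r} (n div r) - {\<lambda>_. 0}
      else bounded_vectors {x\<in>P. deg x = 1} (n mod r))"

definition mixed_divisors :: "nat \<Rightarrow> nat \<Rightarrow> ('p \<Rightarrow> nat) set" where
  "mixed_divisors n r = glue_parts {1, r} ` PiE {1, r} (mixed_parts n r)"

lemma mixed_parts_subset:
  "s \<in> {1, r} \<Longrightarrow>
     mixed_parts n r s \<subseteq> bounded_vectors {x\<in>P. deg x = s} (if s = r then n div r else n mod r)"
  unfolding mixed_parts_def by auto

lemma mixed_divisors_subset: "mixed_divisors n r \<subseteq> eff_divisors_upto P deg n"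
  unfolding mixed_divisors_def
proof (rule glue_parts_image_subset[OF _ mixed_parts_subset])
  show "(\<Sum>s\<in>{1, r}. s * (if s = r then n div r else n mod r)) \<le> n"
    by (cases "r = 1") auto
qed simp

lemma card_mixed_divisors:
  assumes "r \<noteq> 1"
  shows "int (card (mixed_divisors n r)) =
    (int ((num_places P deg r + n div r) choose (n div r)) - 1)
    * int ((num_places P deg 1 + n mod r) choose (n mod r))"
proof -
  let ?V = "bounded_vectors {x\<in>P. deg x = r} (n div r)"
  have fin_r: "finite {x\<in>P. deg x = r}" and fin_1: "finite {x\<in>P. deg x = 1}"
    using finite_places_of_degree by blast+
  have "card (?V - {\<lambda>_. 0}) = card ?V - 1"
    using zero_in_bounded_vectors finite_bounded_vectors[OF fin_r] by (intro card_Diff_singleton)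
  moreover have "card ?V \<ge> 1"
    using zero_in_bounded_vectors finite_bounded_vectors[OF fin_r]
    by (metis One_nat_def Suc_leI card_gt_0_iff empty_iff)
  moreover have "card (mixed_divisors n r)
      = card (bounded_vectors {x\<in>P. deg x = 1} (n mod r)) * card (?V - {\<lambda>_. 0})"
    unfolding mixed_divisors_def
    using card_glue_parts_image[of "{1, r}" "mixed_parts n r", OF _ mixed_parts_subset] assms
    by (simp add: mixed_parts_def)
  ultimately show ?thesis
    using fin_r fin_1 by (simp add: card_bounded_vectors num_places_def of_nat_diff)
qed

lemma mixed_divisors_nonzero:
  assumes "D \<in> mixed_divisors n r"
  obtains x where "deg x = r" "D x \<noteq> 0"
proof -
  from assms obtain f
    where f: "f \<in> PiE {1, r} (mixed_parts n r)" and D: "D = glue_parts {1, r} f"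
    unfolding mixed_divisors_def by (rule imageE)
  have "f r \<in> mixed_parts n r r"
    using f by (rule PiE_mem) simp
  then have part: "f r \<in> bounded_vectors {x\<in>P. deg x = r} (n div r)" and "f r \<noteq> (\<lambda>_. 0)"
    unfolding mixed_parts_def by auto
  then obtain x where nz: "f r x \<noteq> 0"
    by auto
  have "deg x = r"
    using bounded_vectors_support[OF part nz] by simp
  moreover from this nz have "D x \<noteq> 0"
    unfolding D glue_parts_def by simp
  ultimately show ?thesis
    by (rule that)
qed

lemma mixed_divisors_disjoint_glue_parts_image:
  assumes "r \<notin> I"
  shows "mixed_divisors n r \<inter> glue_parts I ` Y = {}"
proof -
  have "D \<notin> glue_parts I ` Y" if D: "D \<in> mixed_divisors n r" for D
  proof
    obtain x where "deg x = r" "D x \<noteq> 0"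
      using mixed_divisors_nonzero[OF D] .
    moreover assume "D \<in> glue_parts I ` Y"
    ultimately show False
      using assms unfolding glue_parts_def by auto
  qed
  then show ?thesis by blast
qed

lemma choose_sum_le_card_eff_divisors_upto:
  assumes "finite R" "1 \<notin> R"
  shows "int ((num_places P deg 1 + n) choose n)
      + (\<Sum>r\<in>R. (int ((num_places P deg r + n div r) choose (n div r)) - 1)
                * int ((num_places P deg 1 + n mod r) choose (n mod r)))
    \<le> int (card (eff_divisors_upto P deg n))"
proof -
  let ?F = "\<lambda>_. bounded_vectors {x\<in>P. deg x = 1} n"
  define S where "S = glue_parts {1} ` PiE {1} ?F"
  let ?M = "\<Union>r\<in>R. mixed_divisors n r"
  have card_S: "card S = (num_places P deg 1 + n) choose n"
    using card_glue_parts_image[of "{1}" ?F "\<lambda>_. n"] finite_places_of_degree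
    unfolding S_def by (simp add: card_bounded_vectors num_places_def)
  have S_subset: "S \<subseteq> eff_divisors_upto P deg n"
    unfolding S_def by (rule glue_parts_image_subset[of _ _ "\<lambda>_. n"]) auto
  have M_subset: "?M \<subseteq> eff_divisors_upto P deg n"
    using mixed_divisors_subset by blast
  have finite_subsets: "finite X" if "X \<subseteq> eff_divisors_upto P deg n" for X
    using that finite_eff_divisors_upto by (rule finite_subset)
  have "mixed_divisors n r \<inter> S = {}" if "r \<in> R" for r
    unfolding S_def using that assms(2) by (intro mixed_divisors_disjoint_glue_parts_image) auto
  then have "card (S \<union> ?M) = card S + card ?M"
    using S_subset M_subset finite_subsets by (intro card_Un_disjoint) auto
  also have "card ?M = (\<Sum>r\<in>R. card (mixed_divisors n r))"
  proof (rule card_UN_disjoint[OF assms(1)])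
    show "\<forall>r\<in>R. finite (mixed_divisors n r)"
      using mixed_divisors_subset finite_subsets by blast
    show "\<forall>r\<in>R. \<forall>s\<in>R. r \<noteq> s \<longrightarrow> mixed_divisors n r \<inter> mixed_divisors n s = {}"
    proof (intro ballI impI)
      fix r s assume "r \<in> R" "s \<in> R" "r \<noteq> s"
      then show "mixed_divisors n r \<inter> mixed_divisors n s = {}"
        unfolding mixed_divisors_def[of n s] using assms(2)
        by (intro mixed_divisors_disjoint_glue_parts_image) auto
    qed
  qed
  finally have "card S + (\<Sum>r\<in>R. card (mixed_divisors n r)) \<le> card (eff_divisors_upto P deg n)"
    using S_subset M_subset finite_eff_divisors_upto card_mono[of _ "S \<union> ?M"] by fastforce
  then have "int (card S) + (\<Sum>r\<in>R. int (card (mixed_divisors n r)))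
      \<le> int (card (eff_divisors_upto P deg n))"
    by (metis of_nat_add of_nat_le_iff of_nat_sum)
  moreover have "int (card (mixed_divisors n r)) =
      (int ((num_places P deg r + n div r) choose (n div r)) - 1)
      * int ((num_places P deg 1 + n mod r) choose (n mod r))" if "r \<in> R" for r
    using that assms(2) by (intro card_mixed_divisors) auto
  ultimately show ?thesis
    using card_S by simp
qed

end

theorem theorem3p4:
  fixes P :: "'p set" and deg :: "'p \<Rightarrow> nat" and g :: nat
  assumes deg_pos: "\<forall>x\<in>P. 1 \<le> deg x"
    and fin: "\<forall>r. finite {x\<in>P. deg x = r}"
    and g2: "2 \<le> g"
  shows "(\<forall>m :: nat \<Rightarrow> nat.
            (\<Sum>r\<in>Delta1 P deg g. r * m r) \<le> g - 1 \<longrightarrow>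
            Sigma1 P deg g \<ge>
              (\<Prod>r\<in>Delta1 P deg g. (num_places P deg r + m r) choose (m r)))
       \<and> (\<forall>R. num_places P deg 1 \<ge> 1 \<and> R \<subseteq> Delta1 P deg g - {1} \<longrightarrow>
            int (Sigma1 P deg g) \<ge>
              int ((num_places P deg 1 + (g - 1)) choose (g - 1))
              + (\<Sum>r\<in>R. (int ((num_places P deg r + (g - 1) div r) choose ((g - 1) div r)) - 1)
                          * int ((num_places P deg 1 + (g - 1) mod r) choose ((g - 1) mod r))))"
proof (intro conjI allI impI)
  interpret graded_places P deg
    using deg_pos fin by unfold_locales
  have "Delta1 P deg g \<subseteq> {..g - 1}"
    unfolding Delta1_def by auto
  then have finite_Delta1: "finite (Delta1 P deg g)"
    by (rule finite_subset) simp
  show "(\<Prod>r\<in>Delta1 P deg g. (num_places P deg r + m r) choose (m r)) \<le> Sigma1 P deg g"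
    if "(\<Sum>r\<in>Delta1 P deg g. r * m r) \<le> g - 1" for m
    unfolding Sigma1_eq_card_eff_divisors_upto
    using finite_Delta1 that by (rule prod_choose_le_card_eff_divisors_upto)
  fix R assume "num_places P deg 1 \<ge> 1 \<and> R \<subseteq> Delta1 P deg g - {1}"
  then have "finite R" "1 \<notin> R"
    using finite_Delta1 finite_subset by auto
  then show "int ((num_places P deg 1 + (g - 1)) choose (g - 1))
      + (\<Sum>r\<in>R. (int ((num_places P deg r + (g - 1) div r) choose ((g - 1) div r)) - 1)
                * int ((num_places P deg 1 + (g - 1) mod r) choose ((g - 1) mod r)))
    \<le> int (Sigma1 P deg g)"
    unfolding Sigma1_eq_card_eff_divisors_upto by (rule choose_sum_le_card_eff_divisors_upto)
qed

end
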